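(* Let $X$ be a compact metric space and $G$ a group of homeomorphisms of $X$ generated (as a group) by a finite set $G_1$, and assume $G$ is uniformly equicontinuous. Let $\mathcal G(G)$ be the pseudogroup generated by $G$. Then there is no Borel probability measure on $X$ that is $(\mathcal G(G),G_1)$-weakly expansive.
   Context: $(X,d)$ compact metric space. $\mathrm{Homeo}(X)$: homeomorphisms $g:D_g\to R_g$ between open subsets of $X$, composed on natural domains $D_{h\circ g}=g^{-1}(D_h)$. The pseudogroup generated by $\Gamma\subset\mathrm{Homeo}(X)$ is the set of $g\in\mathrm{Homeo}(X)$ such that each $x\in D_g$ has a neighborhood $U_x\subset D_g$ with $g|_{U_x}=g_1^{e_1}\circ\cdots\circ g_k^{e_k}|_{U_x}$ for some $g_i\in\Gamma$, $e_i\in\{\pm1\}$. $G$ is uniformly equicontinuous if for every $\varepsilon>0$ there is $\delta>0$ such that $d(x,y)<\delta$ implies $d(g(x),g(y))<\varepsilon$ for all $g\in G$ and $x,y\in X$. With generating set $G_1$: $\mathcal G_n=\{g_1\circ\cdots\circ g_n:g_i\in G_1\}$, $\mathcal G_n^x=\{g\in\mathcal G_n:x\in D_g\}$, $\Phi_\delta(x)=\{y\in X: d(g(x),g(y))\le\delta\ \forall n\in\mathbb N,\ \forall g\in\mathcal G_n^x\cap\mathcal G_n^y\}$. A Borel probability measure $\mu$ is $(\mathcal G(G),G_1)$-weakly expansive if there is $\delta>0$ with $\mu(\Phi_\delta(x))=0$ for $\mu$-a.e. $x$. *)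

theory Defs
  imports "HOL-Probability.Probability"
begin

inductive_set gen_group :: "('a \<Rightarrow> 'a) set \<Rightarrow> ('a \<Rightarrow> 'a) set" for G1 where
  gen_id: "id \<in> gen_group G1"
| gen_base: "g \<in> G1 \<Longrightarrow> g \<in> gen_group G1"
| gen_inv: "g \<in> G1 \<Longrightarrow> inv g \<in> gen_group G1"
| gen_comp: "g \<in> gen_group G1 \<Longrightarrow> h \<in> gen_group G1 \<Longrightarrow> g \<circ> h \<in> gen_group G1"

definition unif_equicontinuous :: "('a::metric_space \<Rightarrow> 'a) set \<Rightarrow> bool" where
  "unif_equicontinuous G \<longleftrightarrow>
     (\<forall>e>0. \<exists>d>0. \<forall>g\<in>G. \<forall>x y. dist x y < d \<longrightarrow> dist (g x) (g y) < e)"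

text \<open>\<open>\<G>_n\<close>: compositions of exactly n elements of G1 (global maps, so
  every domain is the whole space).\<close>
definition words :: "('a \<Rightarrow> 'a) set \<Rightarrow> nat \<Rightarrow> ('a \<Rightarrow> 'a) set" where
  "words G1 n = {foldr (\<circ>) gs id | gs. length gs = n \<and> set gs \<subseteq> G1}"

definition Phi :: "('a::metric_space \<Rightarrow> 'a) set \<Rightarrow> real \<Rightarrow> 'a \<Rightarrow> 'a set" where
  "Phi G1 \<delta> x = {y. \<forall>n\<ge>1. \<forall>g\<in>words G1 n. dist (g x) (g y) \<le> \<delta>}"

definition weakly_expansive :: "'a::metric_space measure \<Rightarrow> ('a \<Rightarrow> 'a) set \<Rightarrow> bool" where
  "weakly_expansive M G1 \<longleftrightarrow> (\<exists>\<delta>>0. AE x in M. emeasure M (Phi G1 \<delta> x) = 0)"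

end

theory Submission
  imports Defs
begin

text \<open>Uniform equicontinuity of the group gives an \<open>\<eta> > 0\<close> such that \<open>\<Phi>\<^sub>\<delta>(x)\<close> contains the
  ball of radius \<open>\<eta>\<close> around every \<open>x\<close>. Finitely many balls of radius \<open>\<eta>/2\<close> cover the
  compact space, so one of them, \<open>B\<close>, has positive measure. If \<open>\<Phi>\<^sub>\<delta>(x)\<close> were null for
  almost every \<open>x\<close>, some \<open>x \<in> B\<close> would have \<open>\<mu>(\<Phi>\<^sub>\<delta>(x)) = 0\<close>; but \<open>B \<subseteq> ball x \<eta> \<subseteq> \<Phi>\<^sub>\<delta>(x)\<close>.
  Continuity of the generators is needed only to make \<open>\<Phi>\<^sub>\<delta>(x)\<close> closed, hence measurable.\<close>

lemma foldr_comp_in_gen_group: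
  "set gs \<subseteq> G1 \<Longrightarrow> foldr (\<circ>) gs id \<in> gen_group G1"
  by (induction gs) (auto intro: gen_group.intros)

lemma words_subset_gen_group: "words G1 n \<subseteq> gen_group G1"
  unfolding words_def using foldr_comp_in_gen_group by blast

lemma continuous_on_foldr_comp:
  assumes "\<forall>g\<in>set gs. continuous_on UNIV g"
  shows "continuous_on UNIV (foldr (\<circ>) gs id)"
  using assms
proof (induction gs)
  case Nil
  then show ?case by (simp add: continuous_on_id)
next
  case (Cons g gs)
  have "continuous_on UNIV (foldr (\<circ>) gs id)"
    using Cons.prems by (intro Cons.IH) simp
  moreover have "continuous_on UNIV g"
    using Cons.prems by simp
  ultimately have "continuous_on UNIV (g \<circ> foldr (\<circ>) gs id)"
    by (intro continuous_on_compose) (auto intro: continuous_on_subset)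
  moreover have "foldr (\<circ>) (g # gs) id = g \<circ> foldr (\<circ>) gs id"
    by simp
  ultimately show ?case by metis
qed

lemma continuous_on_words:
  assumes "\<forall>g\<in>G1. continuous_on UNIV g" and "g \<in> words G1 n"
  shows "continuous_on UNIV g"
  using assms continuous_on_foldr_comp unfolding words_def by blast

lemma closed_Phi:
  assumes "\<forall>g\<in>G1. continuous_on UNIV g"
  shows "closed (Phi G1 \<delta> x)"
proof -
  have "Phi G1 \<delta> x = (\<Inter>n\<in>{1..}. \<Inter>g\<in>words G1 n. {y. dist (g x) (g y) \<le> \<delta>})"
    unfolding Phi_def by auto
  moreover have "closed {y. dist (g x) (g y) \<le> \<delta>}" if "g \<in> words G1 n" for g n
    using continuous_on_words[OF assms that]
    by (intro closed_Collect_le continuous_on_dist continuous_on_const) auto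
  ultimately show ?thesis by (auto intro!: closed_INT)
qed

lemma ball_subset_Phi:
  assumes "unif_equicontinuous (gen_group G1)" and "\<delta> > 0"
  obtains \<eta> where "\<eta> > 0" and "\<And>x. ball x \<eta> \<subseteq> Phi G1 \<delta> x"
proof -
  obtain \<eta> where "\<eta> > 0"
    and \<eta>: "\<And>g x y. g \<in> gen_group G1 \<Longrightarrow> dist x y < \<eta> \<Longrightarrow> dist (g x) (g y) < \<delta>"
    using assms unfolding unif_equicontinuous_def by meson
  have "ball x \<eta> \<subseteq> Phi G1 \<delta> x" for x
  proof
    fix y
    assume "y \<in> ball x \<eta>"
    then have "dist (g x) (g y) < \<delta>" if "g \<in> words G1 n" for g n
      using \<eta> words_subset_gen_group[of G1 n] that by (auto simp: dist_commute)
    then show "y \<in> Phi G1 \<delta> x"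
      unfolding Phi_def by (auto intro: less_imp_le)
  qed
  with \<open>\<eta> > 0\<close> show thesis by (rule that)
qed

lemma ex_ball_not_null_sets:
  fixes M :: "'a::metric_space measure"
  assumes "compact (UNIV :: 'a set)" and "sets M = sets borel"
    and "space M \<notin> null_sets M" and "r > 0"
  obtains c where "ball c r \<notin> null_sets M"
proof -
  have "x \<in> ball x r" for x :: 'a
    using \<open>r > 0\<close> by simp
  then have cover: "UNIV \<subseteq> (\<Union>c::'a. ball c r)"
    by blast
  obtain C :: "'a set" where "C \<subseteq> UNIV" and "finite C" and C: "UNIV \<subseteq> (\<Union>c\<in>C. ball c r)"
    by (rule compactE_image[OF assms(1) open_ball cover])
  have "space M = UNIV"
    using sets_eq_imp_space_eq[OF assms(2)] by simp
  with C have "(\<Union>c\<in>C. ball c r) = space M"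
    by auto
  with assms(3) have "(\<Union>c\<in>C. ball c r) \<notin> null_sets M"
    by simp
  moreover have "(\<Union>c\<in>C. ball c r) \<in> null_sets M" if "\<And>c. ball c r \<in> null_sets M"
    using that by (intro null_sets.finite_UN[OF \<open>finite C\<close>])
  ultimately show thesis
    using that by blast
qed

lemma AE_ex_in_not_null_sets:
  assumes "AE x in M. P x" and "B \<in> sets M" and "B \<notin> null_sets M"
  shows "\<exists>x\<in>B. P x"
proof -
  obtain N where P: "\<And>x. x \<in> space M - N \<Longrightarrow> P x" and "N \<in> null_sets M"
    using AE_E3[OF assms(1)] by blast
  have "\<not> B \<subseteq> N"
    using null_sets_subset[OF \<open>N \<in> null_sets M\<close> assms(2)] assms(3) by blast
  then show ?thesis
    using P sets.sets_into_space[OF assms(2)] by blast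
qed

lemma not_AE_null_sets_if_ball_subset:
  fixes M :: "'a::metric_space measure"
  assumes "compact (UNIV :: 'a set)" and "sets M = sets borel"
    and "space M \<notin> null_sets M" and "\<eta> > 0"
    and "\<And>x. F x \<in> sets M" and "\<And>x. ball x \<eta> \<subseteq> F x"
  shows "\<not> (AE x in M. F x \<in> null_sets M)"
proof
  assume AE: "AE x in M. F x \<in> null_sets M"
  obtain c where c: "ball c (\<eta>/2) \<notin> null_sets M"
    using ex_ball_not_null_sets[OF assms(1-3), of "\<eta>/2"] \<open>\<eta> > 0\<close> by auto
  have ball_in_sets: "ball c (\<eta>/2) \<in> sets M"
    using assms(2) by simp
  obtain x where x: "x \<in> ball c (\<eta>/2)" and "F x \<in> null_sets M"
    using AE_ex_in_not_null_sets[OF AE ball_in_sets c] by blast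
  have "ball c (\<eta>/2) \<subseteq> ball x \<eta>"
  proof
    fix y
    assume "y \<in> ball c (\<eta>/2)"
    then show "y \<in> ball x \<eta>"
      using x dist_triangle[of x y c] by (auto simp: dist_commute)
  qed
  then have "ball c (\<eta>/2) \<subseteq> F x"
    using assms(6)[of x] by (rule subset_trans)
  with \<open>F x \<in> null_sets M\<close> ball_in_sets have "ball c (\<eta>/2) \<in> null_sets M"
    by (rule null_sets_subset)
  with c show False ..
qed

theorem theoremC:
  fixes G1 :: "('a::metric_space \<Rightarrow> 'a) set"
  assumes "compact (UNIV :: 'a set)"
    and "finite G1"
    and "\<forall>g\<in>G1. \<exists>g'. homeomorphism UNIV UNIV g g'"
    and "unif_equicontinuous (gen_group G1)"
  shows "\<not> (\<exists>M. prob_space M \<and> sets M = sets borel \<and> weakly_expansive M G1)"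
proof
  assume "\<exists>M. prob_space M \<and> sets M = sets borel \<and> weakly_expansive M G1"
  then obtain M \<delta> where "prob_space M" and sets_M: "sets M = sets borel" and "\<delta> > 0"
    and AE: "AE x in M. emeasure M (Phi G1 \<delta> x) = 0"
    unfolding weakly_expansive_def by blast
  obtain \<eta> where "\<eta> > 0" and ball_sub: "\<And>x. ball x \<eta> \<subseteq> Phi G1 \<delta> x"
    using ball_subset_Phi[OF assms(4) \<open>\<delta> > 0\<close>] by blast
  have "\<forall>g\<in>G1. continuous_on UNIV g"
    using assms(3) by (auto dest: homeomorphism_cont1)
  then have Phi_sets: "Phi G1 \<delta> x \<in> sets M" for x
    unfolding sets_M by (intro borel_closed closed_Phi)
  have "space M \<notin> null_sets M"
    using prob_space.emeasure_space_1[OF \<open>prob_space M\<close>] by (auto dest: null_setsD1)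
  then have "\<not> (AE x in M. Phi G1 \<delta> x \<in> null_sets M)"
    by (rule not_AE_null_sets_if_ball_subset[OF assms(1) sets_M _ \<open>\<eta> > 0\<close> Phi_sets ball_sub])
  moreover have "AE x in M. Phi G1 \<delta> x \<in> null_sets M"
    using AE by eventually_elim (simp add: null_setsI Phi_sets)
  ultimately show False ..
qed

end
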